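(* Let $\pi=(\pi_n^{n+1}\colon(X_{n+1},f_{n+1})\to(X_n,f_n))_{n\ge1}$ be an inverse sequence of equivariant maps satisfying MLC(1), and let $(X,f)=\lim_\pi(X_n,f_n)$. Suppose $Y_n\subset X_n$, $n\ge1$, are closed $f_n$-invariant subsets such that (1) $\pi_n^{n+1}(Y_{n+1})\subset Y_n$ for every $n\ge1$, and (2) every $x=(x_n)_{n\ge1}\in X$ satisfies $x_n\in Y_n$ for all $n\ge1$. Let $g_n=f_n|_{Y_n}$ and $\tilde\pi_n^{n+1}=\pi_n^{n+1}|_{Y_{n+1}}\colon Y_{n+1}\to Y_n$. Then the inverse sequence $\tilde\pi=(\tilde\pi_n^{n+1}\colon(Y_{n+1},g_{n+1})\to(Y_n,g_n))_{n\ge1}$ satisfies MLC(1).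
   Context: Each $X_n$ is a compact metric space, $f_n$ a continuous self-map, $\pi_n^{n+1}\colon X_{n+1}\to X_n$ continuous with $f_n\circ\pi_n^{n+1}=\pi_n^{n+1}\circ f_{n+1}$. $X=\{(x_n)\in\prod_n X_n:\pi_n^{n+1}(x_{n+1})=x_n\ \forall n\}$ and $f((x_n))=(f_n(x_n))$. For $m\ge n$, $\pi_n^m=\pi_n^{n+1}\circ\cdots\circ\pi_{m-1}^m$ ($\pi_n^n$ the identity). An inverse sequence $(p_n\colon Z_{n+1}\to Z_n)$ satisfies MLC(1) if $p_n(Z_{n+1})=p_n(p_{n+1}(Z_{n+2}))$ for every $n\ge1$. *)

theory Defs
  imports "HOL-Analysis.Analysis"
begin

text \<open>Inverse sequences are indexed by nat starting at 0 (shift of the paper's n \<ge> 1).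
  Bonding map p n : Z (Suc n) \<rightarrow> Z n.\<close>

definition MLC1 :: "(nat \<Rightarrow> 'a set) \<Rightarrow> (nat \<Rightarrow> 'a \<Rightarrow> 'a) \<Rightarrow> bool" where
  "MLC1 Z p \<longleftrightarrow> (\<forall>n. p n ` Z (Suc n) = p n ` (p (Suc n) ` Z (Suc (Suc n))))"

definition inverse_limit :: "(nat \<Rightarrow> 'a set) \<Rightarrow> (nat \<Rightarrow> 'a \<Rightarrow> 'a) \<Rightarrow> (nat \<Rightarrow> 'a) set" where
  "inverse_limit Z p = {x. (\<forall>n. x n \<in> Z n) \<and> (\<forall>n. p n (x (Suc n)) = x n)}"

end

theory Submission
  imports Defs
begin

text \<open>MLC(1) says that the images \<open>S n = p n ` X (Suc n)\<close> satisfy \<open>p n ` S (Suc n) = S n\<close>.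
  Hence every point of \<open>S n\<close> lies on a thread of the inverse limit: choose preimages upwards
  and project downwards. If \<open>b = p n y\<close> with \<open>y \<in> Y (Suc n)\<close>, the thread through \<open>b\<close> has its
  coordinate at level \<open>n + 2\<close> in \<open>Y (n + 2)\<close> by hypothesis (2), and that coordinate is mapped
  to \<open>b\<close> by the two bonding maps.\<close>

primrec bond :: "(nat \<Rightarrow> 'a \<Rightarrow> 'a) \<Rightarrow> nat \<Rightarrow> nat \<Rightarrow> 'a \<Rightarrow> 'a" where
  "bond p n 0 = id"
| "bond p n (Suc d) = bond p n d \<circ> p (n + d)"

lemma bond_Suc_left: "bond p n (Suc d) x = p n (bond p (Suc n) d x)"
  by (induction d arbitrary: x) auto

lemma bond_in:
  assumes "\<And>n. p n ` S (Suc n) \<subseteq> S n" and "x \<in> S (n + d)"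
  shows "bond p n d x \<in> S n"
  using assms(2) by (induction d arbitrary: x) (use assms(1) in auto)

lemma bond_chain:
  assumes "\<And>i. p (k + i) (u (Suc i)) = u i"
  shows "bond p k i (u i) = u 0"
  by (induction i) (simp_all add: assms)

lemma inverse_limit_mono:
  assumes "\<And>n. S n \<subseteq> T n"
  shows "inverse_limit S p \<subseteq> inverse_limit T p"
  using assms unfolding inverse_limit_def by blast

lemma chain_above:
  assumes onto: "\<And>n. S n \<subseteq> p n ` S (Suc n)" and a: "a \<in> S k"
  obtains u where "u 0 = a" "\<And>i. u i \<in> S (k + i)" "\<And>i. p (k + i) (u (Suc i)) = u i"
proof -
  have "\<forall>n b. \<exists>c. b \<in> S n \<longrightarrow> c \<in> S (Suc n) \<and> p n c = b"
    using onto by blast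
  then obtain g where g: "\<And>n b. b \<in> S n \<Longrightarrow> g n b \<in> S (Suc n) \<and> p n (g n b) = b"
    by metis
  define u where "u = rec_nat a (\<lambda>i v. g (k + i) v)"
  have u_in: "u i \<in> S (k + i)" for i
    by (induction i) (use a g in \<open>auto simp: u_def\<close>)
  show thesis
  proof
    show "u 0 = a" by (simp add: u_def)
    show "u i \<in> S (k + i)" for i by (fact u_in)
    show "p (k + i) (u (Suc i)) = u i" for i
      using g[OF u_in[of i]] by (simp add: u_def)
  qed
qed

text \<open>The thread through \<open>a\<close> is read off a chain \<open>u\<close> above \<open>a\<close> along the diagonal:
  its coordinate at level \<open>m\<close> is the image of \<open>u m\<close>, which sits at level \<open>m + k\<close>.\<close>

lemma inverse_limit_proj_onto:
  assumes stable: "\<And>n. p n ` S (Suc n) = S n" and a: "a \<in> S k"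
  shows "\<exists>x \<in> inverse_limit S p. x k = a"
proof -
  obtain u where u0: "u 0 = a" and u_in: "\<And>i. u i \<in> S (k + i)"
    and u_chain: "\<And>i. p (k + i) (u (Suc i)) = u i"
    using chain_above[of S p a k] stable a by blast
  define x where "x m = bond p m k (u m)" for m
  have "x m \<in> S m" for m
    unfolding x_def using u_in[of m] stable by (intro bond_in) (auto simp: add.commute)
  moreover have "p m (x (Suc m)) = x m" for m
  proof -
    have "p m (x (Suc m)) = bond p m (Suc k) (u (Suc m))"
      by (simp only: x_def bond_Suc_left)
    also have "\<dots> = bond p m k (u m)"
      using u_chain[of m] by (simp add: add.commute)
    finally show ?thesis by (simp add: x_def)
  qed
  moreover have "x k = a"
    unfolding x_def using bond_chain[of p k u k] u_chain u0 by simp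
  ultimately show ?thesis unfolding inverse_limit_def by blast
qed

lemma MLC1_thread_through_image:
  assumes p_maps: "\<And>n. p n ` X (Suc n) \<subseteq> X n" and mlc: "MLC1 X p"
    and a: "a \<in> p k ` X (Suc k)"
  shows "\<exists>x \<in> inverse_limit X p. x k = a"
proof -
  let ?S = "\<lambda>n. p n ` X (Suc n)"
  have "p n ` ?S (Suc n) = ?S n" for n
    using mlc unfolding MLC1_def by metis
  then have "\<exists>x \<in> inverse_limit ?S p. x k = a"
    using a by (rule inverse_limit_proj_onto)
  moreover have "inverse_limit ?S p \<subseteq> inverse_limit X p"
    using p_maps by (intro inverse_limit_mono)
  ultimately show ?thesis by blast
qed

theorem lemma3p4:
  fixes X Y :: "nat \<Rightarrow> 'a::metric_space set"
    and f p :: "nat \<Rightarrow> 'a \<Rightarrow> 'a"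
  assumes X_compact: "\<And>n. compact (X n)"
    and f_cont: "\<And>n. continuous_on (X n) (f n)"
    and f_maps: "\<And>n. f n ` X n \<subseteq> X n"
    and p_cont: "\<And>n. continuous_on (X (Suc n)) (p n)"
    and p_maps: "\<And>n. p n ` X (Suc n) \<subseteq> X n"
    and equivariant: "\<And>n x. x \<in> X (Suc n) \<Longrightarrow> f n (p n x) = p n (f (Suc n) x)"
    and mlc: "MLC1 X p"
    and Y_sub: "\<And>n. Y n \<subseteq> X n"
    and Y_closed: "\<And>n. closed (Y n)"
    and Y_inv: "\<And>n. f n ` Y n \<subseteq> Y n"
    and cond1: "\<And>n. p n ` Y (Suc n) \<subseteq> Y n"
    and cond2: "\<And>x n. x \<in> inverse_limit X p \<Longrightarrow> x n \<in> Y n"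
  shows "MLC1 Y p"
  unfolding MLC1_def
proof (intro allI equalityI)
  fix n
  show "p n ` p (Suc n) ` Y (Suc (Suc n)) \<subseteq> p n ` Y (Suc n)"
    using cond1 by (intro image_mono)
  show "p n ` Y (Suc n) \<subseteq> p n ` p (Suc n) ` Y (Suc (Suc n))"
  proof
    fix b assume "b \<in> p n ` Y (Suc n)"
    then obtain x where x: "x \<in> inverse_limit X p" "x n = b"
      using Y_sub MLC1_thread_through_image[OF p_maps mlc] by blast
    then have "b = p n (p (Suc n) (x (Suc (Suc n))))"
      unfolding inverse_limit_def by simp
    with cond2[OF x(1)] show "b \<in> p n ` p (Suc n) ` Y (Suc (Suc n))" by blast
  qed
qed

end
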